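(* Let $\mathcal{Q}^2$ be the set of all quadrilaterals $[I,J] := \mathrm{conv}\{-a e_1, b e_1, -c e_2, d e_2\}$ with $a,b,c,d>0$. Assume that $\mu \colon \mathcal{Q}^2 \to \mathbb{R}^2$ is a valuation which is $\mathrm{VL}(2)$-covariant, i.e. $\mu(\phi P) = \phi\,\mu(P)$ whenever $\phi \in \mathrm{VL}(2)$ and $P, \phi P \in \mathcal{Q}^2$. Define $F(r) := \frac12 \mu_1(\mathrm{conv}\{-e_1, r e_1, -e_2, e_2\})$ for $r \in (0,\infty)$, where $\mu_1,\mu_2$ denote the components of $\mu$. Then for all $a,b,c,d>0$, \[ \mu[I,J] = \begin{pmatrix} -\frac1c & \frac1c & -\frac1d & \frac1d \\ -\frac1a & -\frac1b & \frac1a & \frac1b \end{pmatrix} \begin{pmatrix} F(ac)\\ F(bc) \\ F(ad) \\ F(bd)\end{pmatrix}. \] In particular, $\mu[I,J] = \tilde\mu(\mathrm{conv}\{-ae_1, be_1, -ce_2\}) + \tilde\mu(\mathrm{conv}\{-ae_1,be_1,de_2\})$, where for all $a,b,c,d>0$ \[ \tilde\mu(\mathrm{conv}\{-ae_1, be_1, -ce_2\}) := \begin{pmatrix} \frac1c(F(bc)-F(ac)) \\ -\frac1a F(ac) - \frac1b F(bc)\end{pmatrix}, \qquad \tilde\mu(\mathrm{conv}\{-ae_1, be_1, de_2\}) := \begin{pmatrix} \frac1d(F(bd)-F(ad)) \\ \frac1a F(ad) + \frac1b F(bd)\end{pmatrix}. \]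
   Context: $e_1,e_2$ is the standard basis of $\mathbb{R}^2$. $\mathrm{VL}(2)$ is the group of linear maps of $\mathbb{R}^2$ with determinant $1$ or $-1$. A map $\mu$ on a family $\mathcal{S}$ of sets is a valuation if $\mu(K \cup L) + \mu(K \cap L) = \mu(K) + \mu(L)$ whenever $K, L, K\cup L, K \cap L \in \mathcal{S}$. *)

theory Defs
  imports "HOL-Analysis.Analysis"
begin

definition e1 :: "real^2" where "e1 = axis 1 1"
definition e2 :: "real^2" where "e2 = axis 2 1"

definition quad :: "real \<Rightarrow> real \<Rightarrow> real \<Rightarrow> real \<Rightarrow> (real^2) set" where
  "quad a b c d = convex hull {-(a *\<^sub>R e1), b *\<^sub>R e1, -(c *\<^sub>R e2), d *\<^sub>R e2}"

definition Q2 :: "(real^2) set set" where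
  "Q2 = {P. \<exists>a b c d. a > 0 \<and> b > 0 \<and> c > 0 \<and> d > 0 \<and> P = quad a b c d}"

definition valuation_on :: "'a set set \<Rightarrow> ('a set \<Rightarrow> 'b::ab_group_add) \<Rightarrow> bool" where
  "valuation_on S \<mu> \<longleftrightarrow>
     (\<forall>K L. K \<in> S \<longrightarrow> L \<in> S \<longrightarrow> K \<union> L \<in> S \<longrightarrow> K \<inter> L \<in> S \<longrightarrow>
        \<mu> (K \<union> L) + \<mu> (K \<inter> L) = \<mu> K + \<mu> L)"

definition VL2 :: "(real^2^2) set" where
  "VL2 = {A. det A = 1 \<or> det A = -1}"

definition VL2_covariant :: "((real^2) set \<Rightarrow> real^2) \<Rightarrow> bool" where
  "VL2_covariant \<mu> \<longleftrightarrow>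
     (\<forall>A \<in> VL2. \<forall>P \<in> Q2. (\<lambda>x. A *v x) ` P \<in> Q2 \<longrightarrow>
        \<mu> ((\<lambda>x. A *v x) ` P) = A *v \<mu> P)"

end

theory Submission
  imports Defs
begin

text \<open>
  The quadrilateral \<open>[I,J]\<close> is the unit ball of \<open>g\<^sub>I(x) + g\<^sub>J(y)\<close>, where \<open>g\<^sub>I\<close> is the
  Minkowski functional of the segment \<open>I\<close>; write \<open>[(a,b),(c,d)]\<close> and \<open>[I,(c,d)]\<close> when
  \<open>I = [-a,b]\<close> and \<open>J = [-c,d]\<close>. The value \<open>g\<^sub>J(y)\<close> depends only on
  \<open>c\<close> or only on \<open>d\<close>, according to the sign of \<open>y\<close>; hence quadrilaterals with a common \<open>I\<close> are
  closed under union and intersection, which take the componentwise maximum and minimum of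
  \<open>(c,d)\<close>, and the valuation property becomes the exchange identity
  \<open>\<mu>[I,(c,d)] + \<mu>[I,(c',d')] = \<mu>[I,(c,d')] + \<mu>[I,(c',d)]\<close>.
  Taking \<open>(c',d') = (d,c)\<close> and reflecting \<open>e\<^sub>2 \<mapsto> -e\<^sub>2\<close> gives
  \<open>2\<mu>\<^sub>1[I,(c,d)] = \<mu>\<^sub>1[I,(c,c)] + \<mu>\<^sub>1[I,(d,d)]\<close>; the map \<open>diag(1/c, c)\<close> turns \<open>[cI,(1,1)]\<close> into
  \<open>[I,(c,c)]\<close>; and the exchange identity after swapping the axes, together with the reflection
  \<open>e\<^sub>1 \<mapsto> -e\<^sub>1\<close>, gives \<open>\<mu>\<^sub>1[(x,y),(1,1)] = 2F(y) - 2F(x)\<close>. Swapping the axes once more yields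
  the second component.
\<close>

lemma e1_e2_components [simp]: "e1$1 = 1" "e1$2 = 0" "e2$1 = 0" "e2$2 = 1"
  by (simp_all add: e1_def e2_def axis_def)

definition interval_gauge :: "real \<Rightarrow> real \<Rightarrow> real \<Rightarrow> real" where
  "interval_gauge a b x = max (x / b) (- x / a)"

lemma interval_gauge_of_nonneg: "a > 0 \<Longrightarrow> b > 0 \<Longrightarrow> x \<ge> 0 \<Longrightarrow> interval_gauge a b x = x / b"
  unfolding interval_gauge_def by (simp add: max_absorb1 order_trans[of _ 0])

lemma interval_gauge_of_nonpos: "a > 0 \<Longrightarrow> b > 0 \<Longrightarrow> x \<le> 0 \<Longrightarrow> interval_gauge a b x = - x / a"
  using divide_nonpos_pos[of x a] divide_nonpos_pos[of x b]
  unfolding interval_gauge_def by (simp add: max_absorb2)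

lemma interval_gauge_nonneg: "a > 0 \<Longrightarrow> b > 0 \<Longrightarrow> interval_gauge a b x \<ge> 0"
  by (cases "x \<ge> 0") (simp_all add: interval_gauge_of_nonneg interval_gauge_of_nonpos divide_nonpos_pos)

lemma interval_gauge_times_endpoint:
  "a > 0 \<Longrightarrow> b > 0 \<Longrightarrow> interval_gauge a b x * (if x \<ge> 0 then b else - a) = x"
  by (cases "x \<ge> 0") (simp_all add: interval_gauge_of_nonneg interval_gauge_of_nonpos)

lemma interval_gauge_endpoints [simp]:
  "a > 0 \<Longrightarrow> b > 0 \<Longrightarrow> interval_gauge a b (- a) = 1"
  "a > 0 \<Longrightarrow> b > 0 \<Longrightarrow> interval_gauge a b b = 1"
  "a > 0 \<Longrightarrow> b > 0 \<Longrightarrow> interval_gauge a b 0 = 0"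
  by (simp_all add: interval_gauge_of_nonneg interval_gauge_of_nonpos)

lemma min_max_divide_nonneg:
  fixes y b b' :: real
  assumes "y \<ge> 0" "b > 0" "b' > 0"
  shows "min (y / b) (y / b') = y / max b b'" and "max (y / b) (y / b') = y / min b b'"
  using assms by (cases "b \<le> b'"; simp add: divide_left_mono min_absorb1 min_absorb2 max_absorb1 max_absorb2)+

lemma min_interval_gauge:
  assumes "a > 0" "b > 0" "a' > 0" "b' > 0"
  shows "min (interval_gauge a b x) (interval_gauge a' b' x) = interval_gauge (max a a') (max b b') x"
  using assms min_max_divide_nonneg(1)[of x b b'] min_max_divide_nonneg(1)[of "- x" a a']
  by (cases "x \<ge> 0") (simp_all add: interval_gauge_of_nonneg interval_gauge_of_nonpos)

lemma max_interval_gauge: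
  assumes "a > 0" "b > 0" "a' > 0" "b' > 0"
  shows "max (interval_gauge a b x) (interval_gauge a' b' x) = interval_gauge (min a a') (min b b') x"
  using assms min_max_divide_nonneg(2)[of x b b'] min_max_divide_nonneg(2)[of "- x" a a']
  by (cases "x \<ge> 0") (simp_all add: interval_gauge_of_nonneg interval_gauge_of_nonpos)

lemma convex_halfplane: "convex {p :: real^2. \<alpha> * p$1 + \<beta> * p$2 \<le> \<gamma>}"
proof -
  have "{p :: real^2. \<alpha> * p$1 + \<beta> * p$2 \<le> \<gamma>} = {p. inner (vector [\<alpha>, \<beta>]) p \<le> \<gamma>}"
    by (simp add: inner_vec_def sum_2)
  then show ?thesis by (simp add: convex_halfspace_le)
qed

lemma convex_interval_gauge_sublevel:
  "convex {p :: real^2. interval_gauge a b (p$1) + interval_gauge c d (p$2) \<le> 1}"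
proof -
  have eq: "{p :: real^2. interval_gauge a b (p$1) + interval_gauge c d (p$2) \<le> 1} =
      {p. (1/b) * p$1 + (1/d) * p$2 \<le> 1} \<inter> {p. (-1/a) * p$1 + (1/d) * p$2 \<le> 1} \<inter>
      {p. (1/b) * p$1 + (-1/c) * p$2 \<le> 1} \<inter> {p. (-1/a) * p$1 + (-1/c) * p$2 \<le> 1}"
    by (auto simp: interval_gauge_def)
  show ?thesis unfolding eq by (intro convex_Int convex_halfplane)
qed

lemma convex_quad: "convex (quad a b c d)"
  unfolding quad_def by simp

lemma quad_eq_interval_gauge_sublevel:
  assumes "a > 0" "b > 0" "c > 0" "d > 0"
  shows "quad a b c d = {p. interval_gauge a b (p$1) + interval_gauge c d (p$2) \<le> 1}"
    (is "_ = ?S")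
proof
  show "quad a b c d \<subseteq> ?S"
    unfolding quad_def using assms
    by (intro hull_minimal convex_interval_gauge_sublevel) simp
next
  show "?S \<subseteq> quad a b c d"
  proof
    fix p :: "real^2"
    assume "p \<in> ?S"
    define s where "s = interval_gauge a b (p$1)"
    define t where "t = interval_gauge c d (p$2)"
    define P where "P = (if p$1 \<ge> 0 then b *\<^sub>R e1 else -(a *\<^sub>R e1))"
    define Q where "Q = (if p$2 \<ge> 0 then d *\<^sub>R e2 else -(c *\<^sub>R e2))"
    have "s \<ge> 0" "t \<ge> 0" "s + t \<le> 1"
      using \<open>p \<in> ?S\<close> assms by (simp_all add: s_def t_def interval_gauge_nonneg)
    have "p = s *\<^sub>R P + t *\<^sub>R Q + (1 - s - t) *\<^sub>R 0"
      using interval_gauge_times_endpoint[of a b "p$1"] interval_gauge_times_endpoint[of c d "p$2"] assms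
      by (auto simp: vec_eq_iff forall_2 s_def t_def P_def Q_def split: if_splits)
    then have "p \<in> convex hull {P, Q, 0}"
      unfolding convex_hull_3 using \<open>s \<ge> 0\<close> \<open>t \<ge> 0\<close> \<open>s + t \<le> 1\<close>
      by (intro CollectI exI[of _ s] exI[of _ t] exI[of _ "1 - s - t"]) auto
    moreover have "P \<in> quad a b c d" "Q \<in> quad a b c d"
      unfolding quad_def P_def Q_def by (simp_all add: hull_inc)
    moreover have "0 \<in> quad a b c d"
    proof -
      have "(0 :: real^2) = (b / (a + b)) *\<^sub>R (-(a *\<^sub>R e1)) + (a / (a + b)) *\<^sub>R (b *\<^sub>R e1)"
        by (simp add: vec_eq_iff forall_2)
      also have "\<dots> \<in> quad a b c d"
        unfolding quad_def using assms
        by (intro convexD[OF convex_convex_hull] hull_inc) (simp_all add: add_divide_distrib[symmetric])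
      finally show ?thesis .
    qed
    ultimately have "convex hull {P, Q, 0} \<subseteq> quad a b c d"
      by (intro hull_minimal convex_quad) auto
    then show "p \<in> quad a b c d"
      using \<open>p \<in> convex hull {P, Q, 0}\<close> by blast
  qed
qed

lemma quad_Un:
  assumes "a > 0" "b > 0" "c > 0" "d > 0" "c' > 0" "d' > 0"
  shows "quad a b c d \<union> quad a b c' d' = quad a b (max c c') (max d d')"
  using assms by (auto simp: quad_eq_interval_gauge_sublevel min_interval_gauge[symmetric])

lemma quad_Int:
  assumes "a > 0" "b > 0" "c > 0" "d > 0" "c' > 0" "d' > 0"
  shows "quad a b c d \<inter> quad a b c' d' = quad a b (min c c') (min d d')"
  using assms by (auto simp: quad_eq_interval_gauge_sublevel max_interval_gauge[symmetric])

lemma quad_in_Q2: "a > 0 \<Longrightarrow> b > 0 \<Longrightarrow> c > 0 \<Longrightarrow> d > 0 \<Longrightarrow> quad a b c d \<in> Q2"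
  unfolding Q2_def by blast

lemma valuation_onD:
  "valuation_on S \<mu> \<Longrightarrow> K \<in> S \<Longrightarrow> L \<in> S \<Longrightarrow> K \<union> L \<in> S \<Longrightarrow> K \<inter> L \<in> S \<Longrightarrow>
    \<mu> (K \<union> L) + \<mu> (K \<inter> L) = \<mu> K + \<mu> L"
  unfolding valuation_on_def by blast

lemma valuation_quad_max_min:
  assumes "valuation_on Q2 \<mu>" "a > 0" "b > 0" "c > 0" "d > 0" "c' > 0" "d' > 0"
  shows "\<mu> (quad a b c d) + \<mu> (quad a b c' d') =
    \<mu> (quad a b (max c c') (max d d')) + \<mu> (quad a b (min c c') (min d d'))"
proof -
  have Un: "quad a b c d \<union> quad a b c' d' = quad a b (max c c') (max d d')"
    and Int: "quad a b c d \<inter> quad a b c' d' = quad a b (min c c') (min d d')"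
    using assms by (simp_all add: quad_Un quad_Int)
  have "\<mu> (quad a b c d \<union> quad a b c' d') + \<mu> (quad a b c d \<inter> quad a b c' d') =
      \<mu> (quad a b c d) + \<mu> (quad a b c' d')"
    using assms by (intro valuation_onD) (auto simp: Un Int intro!: quad_in_Q2)
  then show ?thesis unfolding Un Int by simp
qed

lemma valuation_quad_exchange:
  assumes "valuation_on Q2 \<mu>" "a > 0" "b > 0" "c > 0" "d > 0" "c' > 0" "d' > 0"
  shows "\<mu> (quad a b c d) + \<mu> (quad a b c' d') = \<mu> (quad a b c d') + \<mu> (quad a b c' d)"
proof -
  note max_min = valuation_quad_max_min[OF assms(1-3)]
  show ?thesis
  proof (cases "c \<le> c' \<longleftrightarrow> d \<le> d'")
    case True
    then show ?thesis
      using max_min[of c d' c' d] assms by (auto simp: max_def min_def add.commute)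
  next
    case False
    then show ?thesis
      using max_min[of c d c' d'] assms by (auto simp: max_def min_def)
  qed
qed

definition diag2 :: "real \<Rightarrow> real \<Rightarrow> real^2^2" where
  "diag2 s t = vector [vector [s, 0], vector [0, t]]"

definition coord_swap :: "real^2^2" where
  "coord_swap = vector [vector [0, 1], vector [1, 0]]"

lemma diag2_mult_components [simp]: "(diag2 s t *v p)$1 = s * p$1" "(diag2 s t *v p)$2 = t * p$2"
  by (simp_all add: diag2_def matrix_vector_mult_def sum_2)

lemma coord_swap_mult_components [simp]: "(coord_swap *v p)$1 = p$2" "(coord_swap *v p)$2 = p$1"
  by (simp_all add: coord_swap_def matrix_vector_mult_def sum_2)

lemma det_diag2: "det (diag2 s t) = s * t"
  by (simp add: det_2 diag2_def)

lemma det_coord_swap: "det coord_swap = -1"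
  by (simp add: det_2 coord_swap_def)

lemma diag2_mult_axes:
  "diag2 s t *v (k *\<^sub>R e1) = (s * k) *\<^sub>R e1" "diag2 s t *v (k *\<^sub>R e2) = (t * k) *\<^sub>R e2"
  "diag2 s t *v (-(k *\<^sub>R e1)) = -((s * k) *\<^sub>R e1)" "diag2 s t *v (-(k *\<^sub>R e2)) = -((t * k) *\<^sub>R e2)"
  by (simp_all add: vec_eq_iff forall_2)

lemma coord_swap_mult_axes:
  "coord_swap *v (k *\<^sub>R e1) = k *\<^sub>R e2" "coord_swap *v (k *\<^sub>R e2) = k *\<^sub>R e1"
  "coord_swap *v (-(k *\<^sub>R e1)) = -(k *\<^sub>R e2)" "coord_swap *v (-(k *\<^sub>R e2)) = -(k *\<^sub>R e1)"
  by (simp_all add: vec_eq_iff forall_2)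

lemma quad_linear_image:
  "(\<lambda>p. A *v p) ` quad a b c d =
    convex hull {A *v (-(a *\<^sub>R e1)), A *v (b *\<^sub>R e1), A *v (-(c *\<^sub>R e2)), A *v (d *\<^sub>R e2)}"
  unfolding quad_def by (simp add: convex_hull_linear_image[OF matrix_vector_mul_linear])

lemma VL2_covariant_quad:
  assumes "VL2_covariant \<mu>" "det A = 1 \<or> det A = -1"
    and "a > 0" "b > 0" "c > 0" "d > 0" "a' > 0" "b' > 0" "c' > 0" "d' > 0"
    and image: "(\<lambda>p. A *v p) ` quad a b c d = quad a' b' c' d'"
  shows "\<mu> (quad a' b' c' d') = A *v \<mu> (quad a b c d)"
proof -
  have "A \<in> VL2"
    using assms(2) by (simp add: VL2_def)
  moreover have "quad a b c d \<in> Q2" "(\<lambda>p. A *v p) ` quad a b c d \<in> Q2"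
    using assms by (auto simp: image intro!: quad_in_Q2)
  ultimately have "\<mu> ((\<lambda>p. A *v p) ` quad a b c d) = A *v \<mu> (quad a b c d)"
    using assms(1) unfolding VL2_covariant_def by blast
  then show ?thesis
    by (simp add: image)
qed

context
  fixes \<mu> :: "(real^2) set \<Rightarrow> real^2"
  assumes cov: "VL2_covariant \<mu>"
begin

lemma mu1_quad_rescale:
  assumes "s > 0" "a > 0" "b > 0" "c > 0" "d > 0"
  shows "\<mu> (quad (s * a) (s * b) (c / s) (d / s))$1 = s * \<mu> (quad a b c d)$1"
proof -
  have "\<mu> (quad (s * a) (s * b) (c / s) (d / s)) = diag2 s (1 / s) *v \<mu> (quad a b c d)"
  proof (rule VL2_covariant_quad[OF cov])
    show "(\<lambda>p. diag2 s (1 / s) *v p) ` quad a b c d = quad (s * a) (s * b) (c / s) (d / s)"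
      unfolding quad_linear_image by (simp add: diag2_mult_axes quad_def)
  qed (use assms in \<open>simp_all add: det_diag2\<close>)
  then show ?thesis by simp
qed

lemma mu1_quad_reflect_e1:
  assumes "a > 0" "b > 0" "c > 0" "d > 0"
  shows "\<mu> (quad b a c d)$1 = - \<mu> (quad a b c d)$1"
proof -
  have "\<mu> (quad b a c d) = diag2 (-1) 1 *v \<mu> (quad a b c d)"
  proof (rule VL2_covariant_quad[OF cov])
    show "(\<lambda>p. diag2 (-1) 1 *v p) ` quad a b c d = quad b a c d"
      unfolding quad_linear_image by (simp add: diag2_mult_axes quad_def insert_commute)
  qed (use assms in \<open>simp_all add: det_diag2\<close>)
  then show ?thesis by simp
qed

lemma mu1_quad_reflect_e2:
  assumes "a > 0" "b > 0" "c > 0" "d > 0"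
  shows "\<mu> (quad a b d c)$1 = \<mu> (quad a b c d)$1"
proof -
  have "\<mu> (quad a b d c) = diag2 1 (-1) *v \<mu> (quad a b c d)"
  proof (rule VL2_covariant_quad[OF cov])
    show "(\<lambda>p. diag2 1 (-1) *v p) ` quad a b c d = quad a b d c"
      unfolding quad_linear_image by (simp add: diag2_mult_axes quad_def insert_commute)
  qed (use assms in \<open>simp_all add: det_diag2\<close>)
  then show ?thesis by simp
qed

lemma mu_quad_swap_axes:
  assumes "a > 0" "b > 0" "c > 0" "d > 0"
  shows "\<mu> (quad c d a b)$1 = \<mu> (quad a b c d)$2"
proof -
  have "\<mu> (quad c d a b) = coord_swap *v \<mu> (quad a b c d)"
  proof (rule VL2_covariant_quad[OF cov])
    show "(\<lambda>p. coord_swap *v p) ` quad a b c d = quad c d a b"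
      unfolding quad_linear_image by (simp add: coord_swap_mult_axes quad_def insert_commute)
  qed (use assms in \<open>simp_all add: det_coord_swap\<close>)
  then show ?thesis by simp
qed

context
  assumes val: "valuation_on Q2 \<mu>"
begin

lemma mu1_quad_symmetrize:
  assumes "a > 0" "b > 0" "c > 0" "d > 0"
  shows "2 * \<mu> (quad a b c d)$1 = \<mu> (quad a b c c)$1 + \<mu> (quad a b d d)$1"
proof -
  have "\<mu> (quad a b c d) + \<mu> (quad a b d c) = \<mu> (quad a b c c) + \<mu> (quad a b d d)"
    using valuation_quad_exchange[OF val, of a b c d d c] assms by simp
  then have "\<mu> (quad a b c d)$1 + \<mu> (quad a b d c)$1 = \<mu> (quad a b c c)$1 + \<mu> (quad a b d d)$1"
    by (metis vector_add_component)
  then show ?thesis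
    using mu1_quad_reflect_e2[OF assms] by simp
qed

lemma mu1_quad_square:
  assumes "a > 0" "b > 0" "c > 0"
  shows "\<mu> (quad a b c c)$1 = \<mu> (quad (a * c) (b * c) 1 1)$1 / c"
  using mu1_quad_rescale[of "1 / c" "a * c" "b * c" 1 1] assms by simp

lemma mu1_quad_unit:
  assumes "x > 0" "y > 0"
  shows "\<mu> (quad x y 1 1)$1 = \<mu> (quad 1 y 1 1)$1 - \<mu> (quad 1 x 1 1)$1"
proof -
  have "\<mu> (quad 1 1 x y) + \<mu> (quad 1 1 1 1) = \<mu> (quad 1 1 x 1) + \<mu> (quad 1 1 1 y)"
    using valuation_quad_exchange[OF val, of 1 1 x y 1 1] assms by simp
  then have "\<mu> (quad 1 1 x y)$2 + \<mu> (quad 1 1 1 1)$2 = \<mu> (quad 1 1 x 1)$2 + \<mu> (quad 1 1 1 y)$2"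
    by (metis vector_add_component)
  then have "\<mu> (quad x y 1 1)$1 + \<mu> (quad 1 1 1 1)$1 = \<mu> (quad x 1 1 1)$1 + \<mu> (quad 1 y 1 1)$1"
    using assms by (simp add: mu_quad_swap_axes)
  moreover have "\<mu> (quad 1 1 1 1)$1 = 0"
    using mu1_quad_reflect_e1[of 1 1 1 1] by simp
  moreover have "\<mu> (quad x 1 1 1)$1 = - \<mu> (quad 1 x 1 1)$1"
    using mu1_quad_reflect_e1[of 1 x 1 1] assms by simp
  ultimately show ?thesis by simp
qed

lemma mu1_quad:
  assumes "a > 0" "b > 0" "c > 0" "d > 0"
  shows "\<mu> (quad a b c d)$1 =
    (\<mu> (quad 1 (b * c) 1 1)$1 - \<mu> (quad 1 (a * c) 1 1)$1) / (2 * c) +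
    (\<mu> (quad 1 (b * d) 1 1)$1 - \<mu> (quad 1 (a * d) 1 1)$1) / (2 * d)"
proof -
  have "2 * \<mu> (quad a b c d)$1 = \<mu> (quad (a * c) (b * c) 1 1)$1 / c + \<mu> (quad (a * d) (b * d) 1 1)$1 / d"
    using mu1_quad_symmetrize[OF assms] mu1_quad_square[of a b c] mu1_quad_square[of a b d] assms
    by simp
  also have "\<dots> = (\<mu> (quad 1 (b * c) 1 1)$1 - \<mu> (quad 1 (a * c) 1 1)$1) / c +
      (\<mu> (quad 1 (b * d) 1 1)$1 - \<mu> (quad 1 (a * d) 1 1)$1) / d"
    using mu1_quad_unit[of "a * c" "b * c"] mu1_quad_unit[of "a * d" "b * d"] assms by simp
  finally show ?thesis by (simp add: field_simps)
qed

end

end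

theorem lemma3p3:
  fixes \<mu> :: "(real^2) set \<Rightarrow> real^2" and F :: "real \<Rightarrow> real"
  assumes val: "valuation_on Q2 \<mu>"
    and cov: "VL2_covariant \<mu>"
    and F_def: "\<And>r. r > 0 \<Longrightarrow> F r = (1/2) * (\<mu> (quad 1 r 1 1)) $ 1"
    and pos: "a > 0" "b > 0" "c > 0" "d > 0"
  shows "\<mu> (quad a b c d) =
           vector [ -(1/c) * F (a*c) + (1/c) * F (b*c) - (1/d) * F (a*d) + (1/d) * F (b*d),
                    -(1/a) * F (a*c) - (1/b) * F (b*c) + (1/a) * F (a*d) + (1/b) * F (b*d) ]
       \<and> \<mu> (quad a b c d) =
           vector [ (1/c) * (F (b*c) - F (a*c)), -(1/a) * F (a*c) - (1/b) * F (b*c) ]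
         + vector [ (1/d) * (F (b*d) - F (a*d)), (1/a) * F (a*d) + (1/b) * F (b*d) ]"
proof -
  have F_quad: "\<mu> (quad 1 r 1 1)$1 = 2 * F r" if "r > 0" for r
    using F_def[OF that] by simp
  have first: "\<mu> (quad a b c d)$1 = (F (b*c) - F (a*c)) / c + (F (b*d) - F (a*d)) / d"
    using mu1_quad[OF cov val pos] pos by (simp add: F_quad field_simps)
  have second: "\<mu> (quad a b c d)$2 = (F (a*d) - F (a*c)) / a + (F (b*d) - F (b*c)) / b"
    using mu_quad_swap_axes[OF cov pos] mu1_quad[OF cov val pos(3,4,1,2)] pos
    by (simp add: F_quad mult.commute field_simps)
  show ?thesis
    unfolding vec_eq_iff forall_2 using first second by (simp add: diff_divide_distrib)
qed

end
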